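(* Let $\overrightarrow{W}$ be a Morse sequence on a simplicial complex $K$ and let $\sigma,\tau$ be critical simplices of $\overrightarrow{W}$. Then $\sigma\in\widehat{\partial}(\tau)$ if and only if $\tau\in\widehat{\delta}(\sigma)$.
   Context: A simplicial complex $K$ is a finite collection of non-empty finite sets closed under taking non-empty subsets; $\dim\sigma=|\sigma|-1$, $K^{(p)}$ the set of $p$-simplices. A pair $(\sigma,\tau)$ with $\sigma\subsetneq\tau$ is a free pair for $K$ if $\tau$ is the only simplex other than $\sigma$ containing $\sigma$; $K$ is then an elementary expansion of $K\setminus\{\sigma,\tau\}$. If $\nu$ is a facet (maximal simplex) of $K$, $K$ is an elementary filling of $K\setminus\{\nu\}$. A Morse sequence on $K$ is a sequence $\langle\emptyset=K_0,\dots,K_k=K\rangle$ with each $K_i$ an elementary expansion or filling of $K_{i-1}$; simplices added by fillings are critical; for an expansion $K_i=K_{i-1}\cup\{\sigma,\tau\}$, $\sigma\subset\tau$, $(\sigma,\tau)$ is a regular pair, $\sigma$ lower regular, $\tau$ upper regular. $K[p]$ is the $\mathbb{Z}_2$-vector space of subsets of $K^{(p)}$ (sum = symmetric difference, $0=\emptyset$); $\partial(\sigma)=\{\tau\in K^{(p-1)}:\tau\subset\sigma\}$, $\delta(\sigma)=\{\tau\in K^{(p+1)}:\sigma\subset\tau\}$, extended linearly to chains. The reference map $\curlywedge$ is the unique map assigning to each $p$-simplex a set of critical $p$-simplices, extended linearly (mod 2) to chains, with $\curlywedge(\nu)=\{\nu\}$ for critical $\nu$ and $\curlywedge(\tau)=0=\curlywedge(\partial(\tau))$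 for upper regular $\tau$; the coreference map $\curlyvee$ is the unique such map with $\curlyvee(\nu)=\{\nu\}$ for critical $\nu$ and $\curlyvee(\sigma)=0=\curlyvee(\delta(\sigma))$ for lower regular $\sigma$. For a critical $p$-simplex $\nu$, $\widehat{\partial}(\nu)=\curlywedge(\partial(\nu))$ and $\widehat{\delta}(\nu)=\curlyvee(\delta(\nu))$. *)

theory Defs
  imports Main
begin

text \<open>Simplices are finite non-empty sets of vertices; a simplex s has dimension card s - 1.\<close>

definition simplicial_complex :: "'a set set \<Rightarrow> bool" where
  "simplicial_complex K \<longleftrightarrow> finite K \<and> (\<forall>s\<in>K. finite s \<and> s \<noteq> {}) \<and>
     (\<forall>s\<in>K. \<forall>t. t \<subseteq> s \<and> t \<noteq> {} \<longrightarrow> t \<in> K)"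

definition free_pair :: "'a set set \<Rightarrow> 'a set \<Rightarrow> 'a set \<Rightarrow> bool" where
  "free_pair K \<sigma> \<tau> \<longleftrightarrow> \<sigma> \<subset> \<tau> \<and> \<sigma> \<in> K \<and> \<tau> \<in> K \<and>
     (\<forall>\<rho>\<in>K. \<sigma> \<subseteq> \<rho> \<longrightarrow> \<rho> = \<sigma> \<or> \<rho> = \<tau>)"

definition facet :: "'a set set \<Rightarrow> 'a set \<Rightarrow> bool" where
  "facet K \<nu> \<longleftrightarrow> \<nu> \<in> K \<and> (\<forall>\<rho>\<in>K. \<nu> \<subseteq> \<rho> \<longrightarrow> \<rho> = \<nu>)"

definition elem_expansion :: "'a set set \<Rightarrow> 'a set set \<Rightarrow> bool" where
  "elem_expansion K L \<longleftrightarrow> (\<exists>\<sigma> \<tau>. free_pair K \<sigma> \<tau> \<and> L = K - {\<sigma>, \<tau>})"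

definition elem_filling :: "'a set set \<Rightarrow> 'a set set \<Rightarrow> bool" where
  "elem_filling K L \<longleftrightarrow> (\<exists>\<nu>. facet K \<nu> \<and> L = K - {\<nu>})"

definition morse_seq :: "'a set set \<Rightarrow> 'a set set list \<Rightarrow> bool" where
  "morse_seq K Ks \<longleftrightarrow> Ks \<noteq> [] \<and> Ks ! 0 = {} \<and> last Ks = K \<and>
     (\<forall>i. Suc i < length Ks \<longrightarrow> simplicial_complex (Ks ! Suc i) \<and>
        (elem_expansion (Ks ! Suc i) (Ks ! i) \<or> elem_filling (Ks ! Suc i) (Ks ! i)))"

definition critical :: "'a set set list \<Rightarrow> 'a set \<Rightarrow> bool" where
  "critical Ks \<nu> \<longleftrightarrow> (\<exists>i. Suc i < length Ks \<and> facet (Ks ! Suc i) \<nu> \<and> Ks ! i = Ks ! Suc i - {\<nu>})"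

definition regular_pair :: "'a set set list \<Rightarrow> 'a set \<Rightarrow> 'a set \<Rightarrow> bool" where
  "regular_pair Ks \<sigma> \<tau> \<longleftrightarrow> (\<exists>i. Suc i < length Ks \<and> free_pair (Ks ! Suc i) \<sigma> \<tau> \<and>
      Ks ! i = Ks ! Suc i - {\<sigma>, \<tau>})"

definition lower_regular :: "'a set set list \<Rightarrow> 'a set \<Rightarrow> bool" where
  "lower_regular Ks \<sigma> \<longleftrightarrow> (\<exists>\<tau>. regular_pair Ks \<sigma> \<tau>)"

definition upper_regular :: "'a set set list \<Rightarrow> 'a set \<Rightarrow> bool" where
  "upper_regular Ks \<tau> \<longleftrightarrow> (\<exists>\<sigma>. regular_pair Ks \<sigma> \<tau>)"

text \<open>Boundary and coboundary of a simplex in K (chains = finite sets of simplices, Z_2 sums).\<close>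
definition bd :: "'a set set \<Rightarrow> 'a set \<Rightarrow> 'a set set" where
  "bd K \<sigma> = {t \<in> K. t \<subseteq> \<sigma> \<and> card t + 1 = card \<sigma>}"

definition cobd :: "'a set set \<Rightarrow> 'a set \<Rightarrow> 'a set set" where
  "cobd K \<sigma> = {t \<in> K. \<sigma> \<subseteq> t \<and> card t = card \<sigma> + 1}"

definition lin_ext :: "('a set \<Rightarrow> 'a set set) \<Rightarrow> 'a set set \<Rightarrow> 'a set set" where
  "lin_ext f c = {\<nu>. odd (card {x \<in> c. \<nu> \<in> f x})}"

definition reference_map :: "'a set set \<Rightarrow> 'a set set list \<Rightarrow> 'a set \<Rightarrow> 'a set set" where
  "reference_map K Ks = (THE r.
     (\<forall>x. x \<notin> K \<longrightarrow> r x = {}) \<and>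
     (\<forall>x\<in>K. r x \<subseteq> {\<nu> \<in> K. critical Ks \<nu> \<and> card \<nu> = card x}) \<and>
     (\<forall>\<nu>. critical Ks \<nu> \<longrightarrow> r \<nu> = {\<nu>}) \<and>
     (\<forall>\<tau>. upper_regular Ks \<tau> \<longrightarrow> r \<tau> = {} \<and> lin_ext r (bd K \<tau>) = {}))"

definition coreference_map :: "'a set set \<Rightarrow> 'a set set list \<Rightarrow> 'a set \<Rightarrow> 'a set set" where
  "coreference_map K Ks = (THE r.
     (\<forall>x. x \<notin> K \<longrightarrow> r x = {}) \<and>
     (\<forall>x\<in>K. r x \<subseteq> {\<nu> \<in> K. critical Ks \<nu> \<and> card \<nu> = card x}) \<and>
     (\<forall>\<nu>. critical Ks \<nu> \<longrightarrow> r \<nu> = {\<nu>}) \<and>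
     (\<forall>\<sigma>. lower_regular Ks \<sigma> \<longrightarrow> r \<sigma> = {} \<and> lin_ext r (cobd K \<sigma>) = {}))"

definition morse_bd :: "'a set set \<Rightarrow> 'a set set list \<Rightarrow> 'a set \<Rightarrow> 'a set set" where
  "morse_bd K Ks \<nu> = lin_ext (reference_map K Ks) (bd K \<nu>)"

definition morse_cobd :: "'a set set \<Rightarrow> 'a set set list \<Rightarrow> 'a set \<Rightarrow> 'a set set" where
  "morse_cobd K Ks \<nu> = lin_ext (coreference_map K Ks) (cobd K \<nu>)"

end

theory Submission
  imports Defs
begin

text \<open>
  The defining conditions of the reference map form a triangular linear system over \<open>\<int>\<^sub>2\<close>:
  if \<open>(\<sigma>, \<tau>)\<close> is a regular pair, the condition \<open>\<curlywedge>(\<partial>\<tau>) = 0\<close> determines \<open>\<curlywedge>(\<sigma>)\<close> from the values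
  on the other faces of \<open>\<tau>\<close>, all of which appear strictly earlier in the Morse sequence. Hence
  the map exists and is unique, by induction on the step at which a simplex appears; the
  coreference map is handled in the same way, with the order of the steps reversed.

  For critical \<open>\<sigma>\<close> and \<open>\<tau>\<close>, count the pairs \<open>(x, y)\<close> with \<open>x \<in> \<partial>(y)\<close>, \<open>\<sigma> \<in> \<curlywedge>(x)\<close> and
  \<open>\<tau> \<in> \<curlyvee>(y)\<close>. Grouped by \<open>y\<close>, every \<open>y \<noteq> \<tau>\<close> contributes an even number, since \<open>\<tau> \<in> \<curlyvee>(y)\<close>
  forces \<open>y\<close> to be upper regular and then \<open>\<curlywedge>(\<partial>y) = 0\<close>; so the count has the parity of
  \<open>[\<sigma> \<in> \<curlywedge>(\<partial>\<tau>)]\<close>. Grouped by \<open>x\<close>, it has the parity of \<open>[\<tau> \<in> \<curlyvee>(\<delta>\<sigma>)]\<close> in the same way.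
\<close>

lemma lin_ext_cong: "(\<And>x. x \<in> c \<Longrightarrow> f x = g x) \<Longrightarrow> lin_ext f c = lin_ext g c"
  unfolding lin_ext_def by (metis (mono_tags, lifting) Collect_cong)

lemma lin_ext_subset_UN: "lin_ext f c \<subseteq> (\<Union>x\<in>c. f x)"
  unfolding lin_ext_def by (auto, metis (mono_tags, lifting) card.empty empty_Collect_eq even_zero)

lemma lin_ext_eq_empty_iff:
  assumes "finite c" "a \<in> c"
  shows "lin_ext f c = {} \<longleftrightarrow> f a = lin_ext f (c - {a})"
proof -
  have "card {x \<in> c. \<nu> \<in> f x} = card {x \<in> c - {a}. \<nu> \<in> f x} + (if \<nu> \<in> f a then 1 else 0)"
    for \<nu>
  proof -
    have "{x \<in> c. \<nu> \<in> f x} = (if \<nu> \<in> f a then insert a else id) {x \<in> c - {a}. \<nu> \<in> f x}"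
      using assms(2) by auto
    then show ?thesis using assms(1) by simp
  qed
  then show ?thesis unfolding lin_ext_def by auto
qed

definition reference_spec ::
    "'a set set \<Rightarrow> ('a set \<Rightarrow> bool) \<Rightarrow> ('a set \<Rightarrow> bool) \<Rightarrow> ('a set \<Rightarrow> 'a set set)
      \<Rightarrow> ('a set \<Rightarrow> 'a set set) \<Rightarrow> bool" where
  "reference_spec K crit kill N r \<longleftrightarrow> (\<forall>x. x \<notin> K \<longrightarrow> r x = {}) \<and>
     (\<forall>x\<in>K. r x \<subseteq> {\<nu> \<in> K. crit \<nu> \<and> card \<nu> = card x}) \<and>
     (\<forall>\<nu>. crit \<nu> \<longrightarrow> r \<nu> = {\<nu>}) \<and>
     (\<forall>u. kill u \<longrightarrow> r u = {} \<and> lin_ext r (N u) = {})"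

locale reference_system =
  fixes K :: "'a set set" and crit kill :: "'a set \<Rightarrow> bool" and N :: "'a set \<Rightarrow> 'a set set"
    and partner :: "'a set \<Rightarrow> 'a set" and rk :: "'a set \<Rightarrow> nat"
  assumes finite_K: "finite K"
    and crit_in_K: "crit x \<Longrightarrow> x \<in> K"
    and crit_not_kill: "crit x \<Longrightarrow> \<not> kill x"
    and N_subset_K: "kill u \<Longrightarrow> N u \<subseteq> K"
    and partner_in_N: "kill u \<Longrightarrow> partner u \<in> N u"
    and rk_less_partner: "kill u \<Longrightarrow> y \<in> N u \<Longrightarrow> y \<noteq> partner u \<Longrightarrow> rk y < rk (partner u)"
    and card_N: "kill u \<Longrightarrow> y \<in> N u \<Longrightarrow> card y = card (partner u)"
    and partner_not_crit: "kill u \<Longrightarrow> \<not> crit (partner u)"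
    and partner_not_kill: "kill u \<Longrightarrow> \<not> kill (partner u)"
    and inj_partner: "kill u \<Longrightarrow> kill v \<Longrightarrow> partner u = partner v \<Longrightarrow> u = v"
    and K_cases: "x \<in> K \<Longrightarrow> crit x \<or> kill x \<or> (\<exists>u. kill u \<and> x = partner u)"
begin

definition killer :: "'a set \<Rightarrow> 'a set" where
  "killer x = (THE u. kill u \<and> partner u = x)"

lemma killer_partner: "kill u \<Longrightarrow> killer (partner u) = u"
  unfolding killer_def using inj_partner by (intro the_equality) auto

lemma partner_in_K: "kill u \<Longrightarrow> partner u \<in> K"
  using N_subset_K partner_in_N by blast

definition update :: "('a set \<Rightarrow> 'a set set) \<Rightarrow> 'a set \<Rightarrow> 'a set set" where
  "update f x = (if x \<notin> K then {} else if crit x then {x} else if kill x then {}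
     else lin_ext f (N (killer x) - {x}))"

lemma update_partner: "kill u \<Longrightarrow> update f (partner u) = lin_ext f (N u - {partner u})"
  using partner_in_K partner_not_crit partner_not_kill killer_partner by (simp add: update_def)

lemma update_cong_below:
  assumes "\<And>y. y \<in> K \<Longrightarrow> rk y < rk x \<Longrightarrow> f y = g y"
  shows "update f x = update g x"
proof (cases "x \<in> K \<and> \<not> crit x \<and> \<not> kill x")
  case True
  then obtain u where u: "kill u" "x = partner u"
    using K_cases by blast
  have "lin_ext f (N u - {x}) = lin_ext g (N u - {x})"
    using assms N_subset_K[OF u(1)] rk_less_partner[OF u(1)] u(2) by (intro lin_ext_cong) blast
  then show ?thesis
    using update_partner[OF u(1)] u(2) by simp
next
  case False
  then show ?thesis by (auto simp: update_def)
qed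

lemma update_fixpoint_unique:
  assumes "update f = f" "update g = g"
  shows "f = g"
proof
  fix x
  show "f x = g x"
  proof (induction "rk x" arbitrary: x rule: less_induct)
    case less
    then have "update f x = update g x"
      by (intro update_cong_below) blast
    then show ?case
      using assms by simp
  qed
qed

lemma update_funpow_stable:
  "x \<in> K \<Longrightarrow> rk x < n \<Longrightarrow> (update ^^ n) f x = (update ^^ n) g x"
proof (induction n arbitrary: x)
  case 0
  then show ?case by simp
next
  case (Suc n)
  have "update ((update ^^ n) f) x = update ((update ^^ n) g) x"
    using Suc by (intro update_cong_below) simp
  then show ?case by simp
qed

lemma update_fixpoint_exists: "\<exists>f. update f = f"
proof -
  define m where "m = Suc (Max (rk ` K))"
  define f where "f = (update ^^ m) (\<lambda>_. {})"
  have "update f x = f x" for x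
  proof (cases "x \<in> K")
    case True
    then have "rk x < m"
      using finite_K by (simp add: m_def le_imp_less_Suc)
    have "update f x = (update ^^ m) (update (\<lambda>_. {})) x"
      by (simp add: f_def funpow_swap1)
    also have "\<dots> = f x"
      unfolding f_def using True \<open>rk x < m\<close> by (rule update_funpow_stable)
    finally show ?thesis .
  next
    case False
    then show ?thesis
      by (simp add: f_def m_def update_def)
  qed
  then show ?thesis by blast
qed

lemma update_fixpoint_values:
  assumes "update r = r" "x \<in> K"
  shows "r x \<subseteq> {\<nu> \<in> K. crit \<nu> \<and> card \<nu> = card x}"
  using assms(2)
proof (induction "rk x" arbitrary: x rule: less_induct)
  case less
  consider "crit x" | "kill x" | u where "kill u" "x = partner u" "\<not> crit x" "\<not> kill x"
    using K_cases[OF less.prems] by blast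
  then show ?case
  proof cases
    case 1
    then have "r x = {x}"
      using fun_cong[OF assms(1), of x] less.prems by (simp add: update_def)
    then show ?thesis
      using 1 less.prems by simp
  next
    case 2
    then have "r x = {}"
      using fun_cong[OF assms(1), of x] crit_not_kill[of x] by (simp add: update_def split: if_splits)
    then show ?thesis by simp
  next
    case 3
    have "r x = lin_ext r (N u - {x})"
      using update_partner[OF 3(1), of r] assms(1) 3(2) by simp
    also have "\<dots> \<subseteq> (\<Union>y\<in>N u - {x}. r y)"
      by (rule lin_ext_subset_UN)
    also have "\<dots> \<subseteq> {\<nu> \<in> K. crit \<nu> \<and> card \<nu> = card x}"
    proof (intro UN_least)
      fix y assume y: "y \<in> N u - {x}"
      then have "y \<in> K" "rk y < rk x" "card y = card x"
        using N_subset_K[OF 3(1)] rk_less_partner[OF 3(1)] card_N[OF 3(1)] 3(2) by auto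
      then show "r y \<subseteq> {\<nu> \<in> K. crit \<nu> \<and> card \<nu> = card x}"
        using less.hyps[of y] by simp
    qed
    finally show ?thesis .
  qed
qed

lemma reference_spec_iff_update_fixpoint:
  "reference_spec K crit kill N r \<longleftrightarrow> update r = r"
proof
  assume spec: "reference_spec K crit kill N r"
  show "update r = r"
  proof
    fix x
    show "update r x = r x"
    proof (cases "x \<in> K \<and> \<not> crit x \<and> \<not> kill x")
      case True
      then obtain u where u: "kill u" "x = partner u"
        using K_cases by blast
      have "finite (N u)"
        using N_subset_K[OF u(1)] finite_K finite_subset by blast
      moreover have "lin_ext r (N u) = {}"
        using spec u(1) unfolding reference_spec_def by blast
      ultimately have "r (partner u) = lin_ext r (N u - {partner u})"
        using lin_ext_eq_empty_iff partner_in_N[OF u(1)] by blast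
      then show ?thesis
        using update_partner[OF u(1), of r] u(2) by simp
    next
      case False
      then show ?thesis
        using spec crit_not_kill unfolding reference_spec_def update_def by auto
    qed
  qed
next
  assume fixpoint: "update r = r"
  have kill_lin_ext: "lin_ext r (N u) = {}" if "kill u" for u
  proof -
    have "finite (N u)"
      using N_subset_K[OF that] finite_K finite_subset by blast
    moreover have "r (partner u) = lin_ext r (N u - {partner u})"
      using update_partner[OF that, of r] fixpoint by simp
    ultimately show ?thesis
      using lin_ext_eq_empty_iff partner_in_N[OF that] by blast
  qed
  show "reference_spec K crit kill N r"
    unfolding reference_spec_def
  proof (intro conjI allI impI ballI)
    show "r x = {}" if "x \<notin> K" for x
      using that fun_cong[OF fixpoint, of x] by (simp add: update_def)
    show "r \<nu> = {\<nu>}" if "crit \<nu>" for \<nu>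
      using that fun_cong[OF fixpoint, of \<nu>] crit_in_K by (simp add: update_def)
    show "r u = {}" if "kill u" for u
      using that fun_cong[OF fixpoint, of u] crit_not_kill[of u] by (auto simp: update_def split: if_splits)
  qed (use update_fixpoint_values[OF fixpoint] kill_lin_ext in blast)+
qed

lemma ex1_reference_spec: "\<exists>!r. reference_spec K crit kill N r"
  using update_fixpoint_exists update_fixpoint_unique
  unfolding reference_spec_iff_update_fixpoint by blast

lemma reference_spec_The: "reference_spec K crit kill N (THE r. reference_spec K crit kill N r)"
  using ex1_reference_spec by (rule theI')

end

lemma free_pair_card:
  assumes "simplicial_complex L" "free_pair L \<sigma> \<tau>"
  shows "card \<tau> = card \<sigma> + 1"
proof -
  have "\<sigma> \<subset> \<tau>" "\<tau> \<in> L" and free: "\<And>\<rho>. \<rho> \<in> L \<Longrightarrow> \<sigma> \<subseteq> \<rho> \<Longrightarrow> \<rho> = \<sigma> \<or> \<rho> = \<tau>"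
    using assms(2) unfolding free_pair_def by blast+
  then obtain v where v: "v \<in> \<tau>" "v \<notin> \<sigma>"
    by blast
  have "finite \<tau>"
    using assms(1) \<open>\<tau> \<in> L\<close> unfolding simplicial_complex_def by blast
  then have "finite \<sigma>"
    using \<open>\<sigma> \<subset> \<tau>\<close> finite_subset by blast
  have "insert v \<sigma> \<subseteq> \<tau>"
    using \<open>\<sigma> \<subset> \<tau>\<close> v(1) by blast
  then have "insert v \<sigma> \<in> L"
    using assms(1) \<open>\<tau> \<in> L\<close> unfolding simplicial_complex_def by blast
  then have "\<tau> = insert v \<sigma>"
    using free[of "insert v \<sigma>"] v(2) by blast
  then show ?thesis
    using \<open>finite \<sigma>\<close> v(2) by simp
qed

locale morse_sequence =
  fixes K :: "'a set set" and Ks :: "'a set set list"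
  assumes complex_K: "simplicial_complex K"
    and morse_Ks: "morse_seq K Ks"
begin

lemma Ks_step:
  "Suc i < length Ks \<Longrightarrow> simplicial_complex (Ks ! Suc i) \<and>
     (elem_expansion (Ks ! Suc i) (Ks ! i) \<or> elem_filling (Ks ! Suc i) (Ks ! i))"
  using morse_Ks unfolding morse_seq_def by simp

lemma Ks_mono: "i \<le> j \<Longrightarrow> j < length Ks \<Longrightarrow> Ks ! i \<subseteq> Ks ! j"
proof (induction j rule: dec_induct)
  case (step j)
  then have "Ks ! j \<subseteq> Ks ! Suc j"
    using Ks_step[of j] unfolding elem_expansion_def elem_filling_def by blast
  with step show ?case by simp
qed simp

lemma Ks_0: "Ks ! 0 = {}" and Ks_last: "Ks ! (length Ks - 1) = K" and length_Ks: "0 < length Ks"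
  using morse_Ks unfolding morse_seq_def by (auto simp: last_conv_nth)

lemma Ks_subset_K: "i < length Ks \<Longrightarrow> Ks ! i \<subseteq> K"
  using Ks_mono[of i "length Ks - 1"] Ks_last by simp

lemma complex_Ks:
  assumes "i < length Ks"
  shows "simplicial_complex (Ks ! i)"
proof (cases i)
  case 0
  then show ?thesis
    using Ks_0 by (simp add: simplicial_complex_def)
next
  case (Suc j)
  then show ?thesis
    using Ks_step[of j] assms by simp
qed

definition birth :: "'a set \<Rightarrow> nat" where
  "birth x = (LEAST i. x \<in> Ks ! i)"

lemma birth_le: "x \<in> Ks ! j \<Longrightarrow> birth x \<le> j"
  unfolding birth_def by (rule Least_le)

lemma birth_eq:
  assumes "Suc i < length Ks" "x \<in> Ks ! Suc i" "x \<notin> Ks ! i"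
  shows "birth x = Suc i"
  unfolding birth_def
proof (rule Least_equality)
  show "Suc i \<le> j" if "x \<in> Ks ! j" for j
  proof (rule ccontr)
    assume "\<not> Suc i \<le> j"
    then have "Ks ! j \<subseteq> Ks ! i"
      using assms(1) by (intro Ks_mono) auto
    then show False
      using that assms(3) by blast
  qed
qed (use assms in simp)

lemma born_in_step:
  assumes "x \<in> K"
  obtains i where "Suc i < length Ks" "x \<in> Ks ! Suc i" "x \<notin> Ks ! i"
proof -
  have in_last: "x \<in> Ks ! (length Ks - 1)"
    using assms Ks_last by simp
  then have born: "x \<in> Ks ! birth x"
    unfolding birth_def by (rule LeastI)
  then obtain i where i: "birth x = Suc i"
    using Ks_0 by (cases "birth x") auto
  have "x \<notin> Ks ! i"
    using not_less_Least[of i "\<lambda>j. x \<in> Ks ! j"] i unfolding birth_def by simp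
  moreover have "Suc i < length Ks"
    using birth_le[OF in_last] i length_Ks by simp
  ultimately show ?thesis
    using that born i by simp
qed

lemma birth_less_length:
  assumes "x \<in> K"
  shows "birth x < length Ks"
proof -
  have "birth x \<le> length Ks - 1"
    using birth_le[of x] Ks_last assms by simp
  then show ?thesis
    using length_Ks by linarith
qed

lemma critical_step:
  assumes "critical Ks \<nu>"
  obtains i where "Suc i < length Ks" "\<nu> \<in> Ks ! Suc i" "Ks ! i = Ks ! Suc i - {\<nu>}"
  using assms unfolding critical_def facet_def by blast

lemma regular_pair_step:
  assumes "regular_pair Ks \<sigma> \<tau>"
  obtains i where "Suc i < length Ks" "free_pair (Ks ! Suc i) \<sigma> \<tau>"
    "\<sigma> \<in> Ks ! Suc i" "\<tau> \<in> Ks ! Suc i" "\<sigma> \<subset> \<tau>" "Ks ! i = Ks ! Suc i - {\<sigma>, \<tau>}"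
  using assms unfolding regular_pair_def free_pair_def by blast

lemma regular_pair_psubset: "regular_pair Ks \<sigma> \<tau> \<Longrightarrow> \<sigma> \<subset> \<tau>"
  by (erule regular_pair_step)

lemma critical_in_K: "critical Ks \<nu> \<Longrightarrow> \<nu> \<in> K"
  using Ks_subset_K by (metis critical_step subsetD)

lemma regular_pair_in_K: "regular_pair Ks \<sigma> \<tau> \<Longrightarrow> \<sigma> \<in> K \<and> \<tau> \<in> K"
  using Ks_subset_K by (metis regular_pair_step subsetD)

lemma regular_pair_card: "regular_pair Ks \<sigma> \<tau> \<Longrightarrow> card \<tau> = card \<sigma> + 1"
  by (metis regular_pair_step complex_Ks free_pair_card)

lemma critical_not_in_regular_pair:
  assumes "critical Ks x" "regular_pair Ks \<sigma> \<tau>"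
  shows "x \<noteq> \<sigma> \<and> x \<noteq> \<tau>"
proof (rule ccontr)
  assume "\<not> (x \<noteq> \<sigma> \<and> x \<noteq> \<tau>)"
  then have x: "x \<in> {\<sigma>, \<tau>}" by blast
  obtain i where i: "Suc i < length Ks" "x \<in> Ks ! Suc i" "Ks ! i = Ks ! Suc i - {x}"
    using assms(1) by (rule critical_step)
  obtain j where j: "Suc j < length Ks" "\<sigma> \<in> Ks ! Suc j" "\<tau> \<in> Ks ! Suc j" "\<sigma> \<subset> \<tau>"
    "Ks ! j = Ks ! Suc j - {\<sigma>, \<tau>}"
    using assms(2) by (rule regular_pair_step)
  have "birth x = Suc i"
    using i by (intro birth_eq) auto
  moreover have "birth x = Suc j"
    using j x by (intro birth_eq) auto
  ultimately have "i = j"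
    by simp
  then have "Ks ! Suc i - {x} = Ks ! Suc i - {\<sigma>, \<tau>}"
    using i(3) j(5) by simp
  moreover have "\<sigma> \<noteq> \<tau>"
    using j(4) by blast
  ultimately show False
    using x j(2,3) \<open>i = j\<close> by blast
qed

lemma regular_pair_unique:
  assumes "regular_pair Ks \<sigma> \<tau>" "regular_pair Ks \<sigma>' \<tau>'" "x \<in> {\<sigma>, \<tau>}" "x \<in> {\<sigma>', \<tau>'}"
  shows "\<sigma> = \<sigma>' \<and> \<tau> = \<tau>'"
proof -
  obtain i where i: "Suc i < length Ks" "\<sigma> \<in> Ks ! Suc i" "\<tau> \<in> Ks ! Suc i" "\<sigma> \<subset> \<tau>"
    "Ks ! i = Ks ! Suc i - {\<sigma>, \<tau>}"
    using assms(1) by (rule regular_pair_step)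
  obtain j where j: "Suc j < length Ks" "\<sigma>' \<in> Ks ! Suc j" "\<tau>' \<in> Ks ! Suc j" "\<sigma>' \<subset> \<tau>'"
    "Ks ! j = Ks ! Suc j - {\<sigma>', \<tau>'}"
    using assms(2) by (rule regular_pair_step)
  have "birth x = Suc i"
    using i assms(3) by (intro birth_eq) auto
  moreover have "birth x = Suc j"
    using j assms(4) by (intro birth_eq) auto
  ultimately have "{\<sigma>, \<tau>} = {\<sigma>', \<tau>'}"
    using i j by auto
  then show ?thesis
    using i(4) j(4) by (metis doubleton_eq_iff less_asym)
qed

lemma K_cases: "x \<in> K \<Longrightarrow> critical Ks x \<or> lower_regular Ks x \<or> upper_regular Ks x"
proof -
  assume "x \<in> K"
  then obtain i where i: "Suc i < length Ks" "x \<in> Ks ! Suc i" "x \<notin> Ks ! i"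
    by (rule born_in_step)
  then consider (expansion) \<sigma> \<tau> where "free_pair (Ks ! Suc i) \<sigma> \<tau>" "Ks ! i = Ks ! Suc i - {\<sigma>, \<tau>}"
    | (filling) \<nu> where "facet (Ks ! Suc i) \<nu>" "Ks ! i = Ks ! Suc i - {\<nu>}"
    using Ks_step unfolding elem_expansion_def elem_filling_def by blast
  then show ?thesis
  proof cases
    case expansion
    then have "regular_pair Ks \<sigma> \<tau>" "x = \<sigma> \<or> x = \<tau>"
      using i unfolding regular_pair_def by auto
    then show ?thesis
      unfolding lower_regular_def upper_regular_def by blast
  next
    case filling
    then show ?thesis
      using i unfolding critical_def by auto
  qed
qed

lemma not_lower_and_upper_regular: "lower_regular Ks x \<Longrightarrow> \<not> upper_regular Ks x"
proof
  assume "lower_regular Ks x" "upper_regular Ks x"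
  then obtain \<rho> \<sigma> where "regular_pair Ks x \<rho>" "regular_pair Ks \<sigma> x"
    unfolding lower_regular_def upper_regular_def by blast
  then have "\<sigma> = x" "\<sigma> \<subset> x"
    using regular_pair_unique[of \<sigma> x x \<rho> x] regular_pair_psubset by auto
  then show False
    by simp
qed

definition lower_partner :: "'a set \<Rightarrow> 'a set" where
  "lower_partner \<tau> = (SOME \<sigma>. regular_pair Ks \<sigma> \<tau>)"

definition upper_partner :: "'a set \<Rightarrow> 'a set" where
  "upper_partner \<sigma> = (SOME \<tau>. regular_pair Ks \<sigma> \<tau>)"

lemma regular_pair_lower_partner: "upper_regular Ks \<tau> \<Longrightarrow> regular_pair Ks (lower_partner \<tau>) \<tau>"
  unfolding upper_regular_def lower_partner_def by (rule someI_ex)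

lemma regular_pair_upper_partner: "lower_regular Ks \<sigma> \<Longrightarrow> regular_pair Ks \<sigma> (upper_partner \<sigma>)"
  unfolding lower_regular_def upper_partner_def by (rule someI_ex)

lemma other_faces_born_earlier:
  assumes "regular_pair Ks \<sigma> \<tau>" "y \<in> bd K \<tau>" "y \<noteq> \<sigma>"
  shows "birth y < birth \<sigma>"
proof -
  obtain i where i: "Suc i < length Ks" "\<sigma> \<in> Ks ! Suc i" "\<tau> \<in> Ks ! Suc i"
    "Ks ! i = Ks ! Suc i - {\<sigma>, \<tau>}"
    using assms(1) by (rule regular_pair_step)
  have y: "y \<in> K" "y \<subseteq> \<tau>" "y \<noteq> \<tau>"
    using assms(2) unfolding bd_def by auto
  then have "y \<noteq> {}"
    using complex_K unfolding simplicial_complex_def by blast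
  then have "y \<in> Ks ! Suc i"
    using complex_Ks[OF i(1)] i(3) y(2) unfolding simplicial_complex_def by blast
  then have "y \<in> Ks ! i"
    using i(4) y(3) assms(3) by blast
  moreover have "birth \<sigma> = Suc i"
    using i by (intro birth_eq) auto
  ultimately show ?thesis
    using birth_le[of y i] by simp
qed

lemma other_cofaces_born_later:
  assumes "regular_pair Ks \<sigma> \<tau>" "y \<in> cobd K \<sigma>" "y \<noteq> \<tau>"
  shows "birth \<tau> < birth y"
proof -
  obtain i where i: "Suc i < length Ks" "free_pair (Ks ! Suc i) \<sigma> \<tau>" "\<tau> \<in> Ks ! Suc i"
    "Ks ! i = Ks ! Suc i - {\<sigma>, \<tau>}"
    using assms(1) by (rule regular_pair_step)
  have y: "y \<in> K" "\<sigma> \<subseteq> y" "y \<noteq> \<sigma>"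
    using assms(2) unfolding cobd_def by auto
  then have "y \<notin> Ks ! Suc i"
    using i(2) assms(3) unfolding free_pair_def by blast
  moreover obtain j where j: "Suc j < length Ks" "y \<in> Ks ! Suc j" "y \<notin> Ks ! j"
    using y(1) by (rule born_in_step)
  ultimately have "i < j"
    using Ks_mono[of "Suc j" "Suc i"] i(1) by (cases "i < j") auto
  moreover have "birth \<tau> = Suc i" "birth y = Suc j"
    using i j by (auto intro: birth_eq)
  ultimately show ?thesis
    by simp
qed

sublocale reference: reference_system K "critical Ks" "upper_regular Ks" "bd K" lower_partner birth
proof unfold_locales
  show "finite K"
    using complex_K unfolding simplicial_complex_def by blast
  show "critical Ks x \<Longrightarrow> x \<in> K" for x
    by (rule critical_in_K)
  show "critical Ks x \<Longrightarrow> \<not> upper_regular Ks x" for x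
    unfolding upper_regular_def using critical_not_in_regular_pair by blast
  show "bd K u \<subseteq> K" for u
    unfolding bd_def by blast
  fix u assume "upper_regular Ks u"
  then have pair: "regular_pair Ks (lower_partner u) u"
    by (rule regular_pair_lower_partner)
  show "lower_partner u \<in> bd K u"
    using regular_pair_in_K[OF pair] regular_pair_card[OF pair] regular_pair_psubset[OF pair]
    unfolding bd_def by auto
  show "birth y < birth (lower_partner u)" if "y \<in> bd K u" "y \<noteq> lower_partner u" for y
    using pair that by (rule other_faces_born_earlier)
  show "card y = card (lower_partner u)" if "y \<in> bd K u" for y
    using that regular_pair_card[OF pair] unfolding bd_def by simp
  show "\<not> critical Ks (lower_partner u)"
    using pair critical_not_in_regular_pair by blast
  show "\<not> upper_regular Ks (lower_partner u)"
    using pair not_lower_and_upper_regular unfolding lower_regular_def by blast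
  show "u = v" if "upper_regular Ks v" "lower_partner u = lower_partner v" for v
    using regular_pair_unique[OF pair regular_pair_lower_partner[OF that(1)],
        of "lower_partner u"] that(2) by simp
next
  fix x assume "x \<in> K"
  moreover have "\<exists>u. upper_regular Ks u \<and> x = lower_partner u" if lower: "lower_regular Ks x"
  proof -
    obtain u where "regular_pair Ks x u"
      using lower unfolding lower_regular_def by blast
    moreover from this have "upper_regular Ks u"
      unfolding upper_regular_def by blast
    ultimately show ?thesis
      using regular_pair_unique[OF _ regular_pair_lower_partner, of x u u u] by auto
  qed
  ultimately show "critical Ks x \<or> upper_regular Ks x \<or> (\<exists>u. upper_regular Ks u \<and> x = lower_partner u)"
    using K_cases by blast
qed

sublocale coreference:
  reference_system K "critical Ks" "lower_regular Ks" "cobd K" upper_partner "\<lambda>x. length Ks - birth x"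
proof unfold_locales
  show "finite K"
    using complex_K unfolding simplicial_complex_def by blast
  show "critical Ks x \<Longrightarrow> x \<in> K" for x
    by (rule critical_in_K)
  show "critical Ks x \<Longrightarrow> \<not> lower_regular Ks x" for x
    unfolding lower_regular_def using critical_not_in_regular_pair by blast
  show "cobd K u \<subseteq> K" for u
    unfolding cobd_def by blast
  fix u assume "lower_regular Ks u"
  then have pair: "regular_pair Ks u (upper_partner u)"
    by (rule regular_pair_upper_partner)
  show "upper_partner u \<in> cobd K u"
    using regular_pair_in_K[OF pair] regular_pair_card[OF pair] regular_pair_psubset[OF pair]
    unfolding cobd_def by auto
  show "length Ks - birth y < length Ks - birth (upper_partner u)"
    if "y \<in> cobd K u" "y \<noteq> upper_partner u" for y
    using other_cofaces_born_later[OF pair that] birth_less_length regular_pair_in_K[OF pair]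
    by (simp add: diff_less_mono2)
  show "card y = card (upper_partner u)" if "y \<in> cobd K u" for y
    using that regular_pair_card[OF pair] unfolding cobd_def by simp
  show "\<not> critical Ks (upper_partner u)"
    using pair critical_not_in_regular_pair by blast
  show "\<not> lower_regular Ks (upper_partner u)"
    using pair not_lower_and_upper_regular unfolding upper_regular_def by blast
  show "u = v" if "lower_regular Ks v" "upper_partner u = upper_partner v" for v
    using regular_pair_unique[OF pair regular_pair_upper_partner[OF that(1)],
        of "upper_partner u"] that(2) by simp
next
  fix x assume "x \<in> K"
  moreover have "\<exists>u. lower_regular Ks u \<and> x = upper_partner u" if upper: "upper_regular Ks x"
  proof -
    obtain u where "regular_pair Ks u x"
      using upper unfolding upper_regular_def by blast
    moreover from this have "lower_regular Ks u"
      unfolding lower_regular_def by blast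
    ultimately show ?thesis
      using regular_pair_unique[OF _ regular_pair_upper_partner, of u x u u] by auto
  qed
  ultimately show "critical Ks x \<or> lower_regular Ks x \<or> (\<exists>u. lower_regular Ks u \<and> x = upper_partner u)"
    using K_cases by blast
qed

lemma reference_map_spec:
  "reference_spec K (critical Ks) (upper_regular Ks) (bd K) (reference_map K Ks)"
  using reference.reference_spec_The unfolding reference_map_def reference_spec_def .

lemma coreference_map_spec:
  "reference_spec K (critical Ks) (lower_regular Ks) (cobd K) (coreference_map K Ks)"
  using coreference.reference_spec_The unfolding coreference_map_def reference_spec_def .

end

lemma odd_sum_iff_odd_term:
  assumes "finite A" "a \<in> A" "\<And>x. x \<in> A - {a} \<Longrightarrow> even (f x :: nat)"
  shows "odd (sum f A) \<longleftrightarrow> odd (f a)"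
proof -
  have "sum f A = f a + sum f (A - {a})"
    using assms(1,2) by (rule sum.remove)
  moreover have "even (sum f (A - {a}))"
    using assms(3) by (intro dvd_sum) auto
  ultimately show ?thesis
    by simp
qed

lemma odd_sum_card_iff_mem_lin_ext:
  fixes K :: "'a set set"
  assumes "finite K"
    and K_cases: "\<And>x. x \<in> K \<Longrightarrow> crit x \<or> kill x \<or> kill' x"
    and r: "reference_spec K crit kill N r"
    and c: "reference_spec K crit kill' N' c"
    and "crit \<tau>"
  shows "odd (\<Sum>y\<in>{y \<in> K. \<tau> \<in> c y}. card {x \<in> N y. \<sigma> \<in> r x}) \<longleftrightarrow> \<sigma> \<in> lin_ext r (N \<tau>)"
proof -
  have c_outside: "\<And>x. x \<notin> K \<Longrightarrow> c x = {}" and c_crit: "\<And>\<nu>. crit \<nu> \<Longrightarrow> c \<nu> = {\<nu>}"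
    and c_kill': "\<And>u. kill' u \<Longrightarrow> c u = {}"
    using c by (simp_all add: reference_spec_def)
  have "odd (\<Sum>y\<in>{y \<in> K. \<tau> \<in> c y}. card {x \<in> N y. \<sigma> \<in> r x}) \<longleftrightarrow>
      odd (card {x \<in> N \<tau>. \<sigma> \<in> r x})"
  proof (rule odd_sum_iff_odd_term[where f = "\<lambda>y. card {x \<in> N y. \<sigma> \<in> r x}"])
    show "finite {y \<in> K. \<tau> \<in> c y}"
      using \<open>finite K\<close> by simp
    show "\<tau> \<in> {y \<in> K. \<tau> \<in> c y}"
      using c_crit[OF \<open>crit \<tau>\<close>] c_outside[of \<tau>] by auto
    fix y assume "y \<in> {y \<in> K. \<tau> \<in> c y} - {\<tau>}"
    then have "kill y"
      using K_cases[of y] c_crit[of y] c_kill'[of y] by auto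
    then have "\<sigma> \<notin> lin_ext r (N y)"
      using r by (simp add: reference_spec_def)
    then show "even (card {x \<in> N y. \<sigma> \<in> r x})"
      unfolding lin_ext_def by simp
  qed
  then show ?thesis
    unfolding lin_ext_def by simp
qed

lemma mem_lin_ext_bd_iff_mem_lin_ext_cobd:
  fixes K :: "'a set set"
  assumes "finite K"
    and K_cases: "\<And>x. x \<in> K \<Longrightarrow> crit x \<or> lower x \<or> upper x"
    and r: "reference_spec K crit upper (bd K) r"
    and c: "reference_spec K crit lower (cobd K) c"
    and "crit \<sigma>" "crit \<tau>"
  shows "\<sigma> \<in> lin_ext r (bd K \<tau>) \<longleftrightarrow> \<tau> \<in> lin_ext c (cobd K \<sigma>)"
proof -
  define A where "A = {x \<in> K. \<sigma> \<in> r x}"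
  define B where "B = {y \<in> K. \<tau> \<in> c y}"
  have "finite A" "finite B"
    using \<open>finite K\<close> unfolding A_def B_def by simp_all
  have "(\<Sum>y\<in>B. card {x \<in> bd K y. \<sigma> \<in> r x}) = (\<Sum>y\<in>B. card {x \<in> A. x \<in> bd K y})"
    unfolding A_def bd_def by (intro sum.cong refl arg_cong[where f = card]) blast
  also have "\<dots> = (\<Sum>x\<in>A. card {y \<in> B. x \<in> bd K y})"
    using \<open>finite A\<close> \<open>finite B\<close> by (rule sum_multicount_gen[symmetric]) simp
  also have "\<dots> = (\<Sum>x\<in>A. card {y \<in> cobd K x. \<tau> \<in> c y})"
    unfolding A_def B_def bd_def cobd_def by (intro sum.cong refl arg_cong[where f = card]) auto
  finally have "odd (\<Sum>y\<in>B. card {x \<in> bd K y. \<sigma> \<in> r x})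
      \<longleftrightarrow> odd (\<Sum>x\<in>A. card {y \<in> cobd K x. \<tau> \<in> c y})"
    by simp
  moreover have "odd (\<Sum>y\<in>B. card {x \<in> bd K y. \<sigma> \<in> r x}) \<longleftrightarrow> \<sigma> \<in> lin_ext r (bd K \<tau>)"
    using odd_sum_card_iff_mem_lin_ext[OF assms(1) _ r c \<open>crit \<tau>\<close>] K_cases unfolding B_def by blast
  moreover have "odd (\<Sum>x\<in>A. card {y \<in> cobd K x. \<tau> \<in> c y}) \<longleftrightarrow> \<tau> \<in> lin_ext c (cobd K \<sigma>)"
    using odd_sum_card_iff_mem_lin_ext[OF assms(1) _ c r \<open>crit \<sigma>\<close>] K_cases unfolding A_def by blast
  ultimately show ?thesis
    by simp
qed

theorem theorem3:
  fixes K :: "'a set set" and Ks :: "'a set set list" and \<sigma> \<tau> :: "'a set"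
  assumes "simplicial_complex K"
    and "morse_seq K Ks"
    and "critical Ks \<sigma>" and "critical Ks \<tau>"
  shows "\<sigma> \<in> morse_bd K Ks \<tau> \<longleftrightarrow> \<tau> \<in> morse_cobd K Ks \<sigma>"
proof -
  interpret morse_sequence K Ks
    using assms(1,2) by unfold_locales
  show ?thesis
    unfolding morse_bd_def morse_cobd_def
    using reference.finite_K K_cases reference_map_spec coreference_map_spec assms(3,4)
    by (rule mem_lin_ext_bd_iff_mem_lin_ext_cobd)
qed

end
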